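(* Fix $i,j\in\{1,\dots,I\}$ and $v,v_*\in\mathbb{R}^3$, and let $E=\langle v\rangle_i^2+\langle v_*\rangle_j^2$ and $r=\frac{m_i}{m_i+m_j}$. Then there exist functions $p=p(v,v_*,m_i,m_j)$, $q=q(v,v_*,m_i,m_j)$ and $s=s(v,v_*,m_i,m_j)\in[0,1]$ with $p+q=E$ such that, with $\lambda:=2\sqrt{r(1-r)(sE-1)((1-s)E-1)}$, for every $\sigma\in S^2$ $$\langle v'\rangle_i^2=p+\lambda\,\sigma\cdot\hat V,\qquad \langle v'_*\rangle_j^2=q-\lambda\,\sigma\cdot\hat V,$$ so that $\langle v'\rangle_i^2+\langle v'_*\rangle_j^2=p+q=E=\langle v\rangle_i^2+\langle v_*\rangle_j^2$. Moreover $p+\lambda\le E$ and $q+\lambda\le E$ for all $v,v_*\in\mathbb{R}^3$ and all $m_i,m_j>0$.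
   Context: Masses $m_1,\dots,m_I>0$, $M:=\sum_{\ell=1}^I m_\ell$, $\langle v\rangle_i:=\big(1+\tfrac{m_i}{M}|v|^2\big)^{1/2}$. For the pair $(i,j)$: $V=\frac{m_iv+m_jv_*}{m_i+m_j}$ (center of mass velocity), $\hat V=V/|V|$, and $v'=V+\frac{m_j}{m_i+m_j}|v-v_*|\sigma$, $v'_*=V-\frac{m_i}{m_i+m_j}|v-v_*|\sigma$ for $\sigma\in S^2$. *)

theory Defs
  imports "HOL-Analysis.Analysis"
begin

definition total_mass :: "nat \<Rightarrow> (nat \<Rightarrow> real) \<Rightarrow> real" where
  "total_mass I m = (\<Sum>l=1..I. m l)"

definition jbr :: "real \<Rightarrow> real \<Rightarrow> real^3 \<Rightarrow> real" where
  "jbr M mi v = sqrt (1 + mi / M * (norm v)\<^sup>2)"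

definition cmvel :: "real \<Rightarrow> real \<Rightarrow> real^3 \<Rightarrow> real^3 \<Rightarrow> real^3" where
  "cmvel mi mj v vs = (1 / (mi + mj)) *\<^sub>R (mi *\<^sub>R v + mj *\<^sub>R vs)"

text \<open>Unit vector of V (0 when V = 0, by the convention 1/0 = 0).\<close>
definition unitv :: "real^3 \<Rightarrow> real^3" where
  "unitv V = (1 / norm V) *\<^sub>R V"

definition vpost :: "real \<Rightarrow> real \<Rightarrow> real^3 \<Rightarrow> real^3 \<Rightarrow> real^3 \<Rightarrow> real^3" where
  "vpost mi mj v vs \<sigma> = cmvel mi mj v vs + (mj / (mi + mj) * norm (v - vs)) *\<^sub>R \<sigma>"

definition vspost :: "real \<Rightarrow> real \<Rightarrow> real^3 \<Rightarrow> real^3 \<Rightarrow> real^3 \<Rightarrow> real^3" where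
  "vspost mi mj v vs \<sigma> = cmvel mi mj v vs - (mi / (mi + mj) * norm (v - vs)) *\<^sub>R \<sigma>"

end

theory Submission
  imports Defs
begin

text \<open>Both post-collisional velocities lie on spheres around the centre of mass velocity V,
  so each post-collisional bracket is a constant plus a multiple of \<open>\<sigma> \<bullet> V\<close>. Exchanging
  the two particles (and \<sigma> with -\<sigma>) turns one bracket into the other, so it suffices to
  compute one of them. The two constants add up to the total pre-collisional energy
  E = 2 + X + Y, where X = (m_i+m_j)|V|^2/M and Y = m_i m_j |v-v_*|^2/((m_i+m_j)M) are the
  centre of mass and relative energies; choosing s = (1+X)/E makes the coefficient \<lambda> of
  \<open>\<sigma> \<bullet> unitv V\<close> exactly 2 sqrt(r(1-r)XY). The bounds p + \<lambda> \<le> E and q + \<lambda> \<le> E are AM-GM.\<close>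

lemma total_mass_pos:
  assumes "\<And>l. l \<in> {1..I} \<Longrightarrow> m l > 0" and "i \<in> {1..I}"
  shows "total_mass I m > 0"
proof -
  have "m i \<le> total_mass I m"
    unfolding total_mass_def using assms by (intro member_le_sum) (auto simp: less_imp_le)
  with assms show ?thesis by force
qed

lemma jbr_sq: "a / M \<ge> 0 \<Longrightarrow> (jbr M a x)\<^sup>2 = 1 + a / M * (norm x)\<^sup>2"
  unfolding jbr_def using mult_nonneg_nonneg[of "a / M" "(norm x)\<^sup>2"] by simp

lemma norm_add_scaleR_sq:
  fixes x y :: "'a::real_inner"
  shows "(norm (x + t *\<^sub>R y))\<^sup>2 = (norm x)\<^sup>2 + 2 * t * (x \<bullet> y) + t\<^sup>2 * (norm y)\<^sup>2"
  unfolding power2_norm_eq_inner by (simp add: inner_add inner_commute power2_eq_square algebra_simps)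

lemma inner_unitv: "x \<bullet> V = norm V * (x \<bullet> unitv V)"
  unfolding unitv_def by (cases "V = 0") auto

lemma cmvel_commute: "cmvel b a vs v = cmvel a b v vs"
  unfolding cmvel_def by (simp add: add.commute)

lemma vspost_eq_vpost_swap: "vspost a b v vs \<sigma> = vpost b a vs v (- \<sigma>)"
  unfolding vspost_def vpost_def cmvel_commute[of b a vs v] norm_minus_commute[of vs v] add.commute[of b a]
  by simp

lemma cmvel_energy:
  assumes "a + b \<noteq> 0"
  shows "a * (norm v)\<^sup>2 + b * (norm vs)\<^sup>2
         = (a + b) * (norm (cmvel a b v vs))\<^sup>2 + a * b / (a + b) * (norm (v - vs))\<^sup>2"
proof -
  have "(a + b) * (norm (cmvel a b v vs))\<^sup>2 = (norm (a *\<^sub>R v + b *\<^sub>R vs))\<^sup>2 / (a + b)"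
    using assms unfolding cmvel_def by (simp add: power2_eq_square)
  then show ?thesis
    using assms unfolding power2_norm_eq_inner
    by (simp add: inner_add inner_diff inner_commute field_simps)
qed

definition post_energy_mean :: "real \<Rightarrow> real \<Rightarrow> real \<Rightarrow> real^3 \<Rightarrow> real^3 \<Rightarrow> real" where
  "post_energy_mean M a b v vs =
     1 + a / M * ((norm (cmvel a b v vs))\<^sup>2 + (b / (a + b) * norm (v - vs))\<^sup>2)"

definition post_energy_amplitude :: "real \<Rightarrow> real \<Rightarrow> real \<Rightarrow> real^3 \<Rightarrow> real^3 \<Rightarrow> real" where
  "post_energy_amplitude M a b v vs =
     2 * a * b * norm (v - vs) * norm (cmvel a b v vs) / (M * (a + b))"

lemma post_energy_amplitude_commute:
  "post_energy_amplitude M b a vs v = post_energy_amplitude M a b v vs"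
  unfolding post_energy_amplitude_def cmvel_commute[of b a vs v] norm_minus_commute[of vs v] add.commute[of b a]
  by (simp add: ac_simps)

lemma jbr_vpost_sq:
  assumes "a / M \<ge> 0" and "norm \<sigma> = 1"
  shows "(jbr M a (vpost a b v vs \<sigma>))\<^sup>2
         = post_energy_mean M a b v vs
           + post_energy_amplitude M a b v vs * (\<sigma> \<bullet> unitv (cmvel a b v vs))"
proof -
  let ?V = "cmvel a b v vs" and ?t = "b / (a + b) * norm (v - vs)"
  have "(norm (vpost a b v vs \<sigma>))\<^sup>2 = (norm ?V)\<^sup>2 + 2 * ?t * (?V \<bullet> \<sigma>) + ?t\<^sup>2"
    unfolding vpost_def norm_add_scaleR_sq assms(2) by simp
  moreover have "?V \<bullet> \<sigma> = norm ?V * (\<sigma> \<bullet> unitv ?V)"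
    by (metis inner_commute inner_unitv)
  ultimately show ?thesis
    unfolding jbr_sq[OF assms(1)] post_energy_mean_def post_energy_amplitude_def
    by (simp add: algebra_simps)
qed

lemma jbr_vspost_sq:
  assumes "b / M \<ge> 0" and "norm \<sigma> = 1"
  shows "(jbr M b (vspost a b v vs \<sigma>))\<^sup>2
         = post_energy_mean M b a vs v
           - post_energy_amplitude M a b v vs * (\<sigma> \<bullet> unitv (cmvel a b v vs))"
  using jbr_vpost_sq[of b M "- \<sigma>" a vs v] assms
  by (simp add: vspost_eq_vpost_swap cmvel_commute[of b a vs v] post_energy_amplitude_commute[of M b a vs v])

lemma post_energy_amplitude_le:
  assumes "a / M \<ge> 0"
  shows "post_energy_amplitude M a b v vs \<le> post_energy_mean M a b v vs - 1"
proof -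
  let ?x = "norm (cmvel a b v vs)" and ?y = "b / (a + b) * norm (v - vs)"
  have "post_energy_amplitude M a b v vs = a / M * (2 * ?x * ?y)"
    unfolding post_energy_amplitude_def by simp
  also have "\<dots> \<le> a / M * (?x\<^sup>2 + ?y\<^sup>2)"
    using mult_left_mono[OF sum_squares_bound assms] .
  finally show ?thesis unfolding post_energy_mean_def by simp
qed

lemma jbr_energy_cmvel:
  assumes "a > 0" and "b > 0" and "M > 0"
  shows "(jbr M a v)\<^sup>2 + (jbr M b vs)\<^sup>2
         = 2 + (a + b) / M * (norm (cmvel a b v vs))\<^sup>2 + a * b / ((a + b) * M) * (norm (v - vs))\<^sup>2"
proof -
  have "(jbr M a v)\<^sup>2 + (jbr M b vs)\<^sup>2 = 2 + (a * (norm v)\<^sup>2 + b * (norm vs)\<^sup>2) / M"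
    using assms by (simp add: jbr_sq add_divide_distrib)
  also have "\<dots> = 2 + (a + b) / M * (norm (cmvel a b v vs))\<^sup>2 + a * b / ((a + b) * M) * (norm (v - vs))\<^sup>2"
    using assms by (subst cmvel_energy) (simp_all add: add_divide_distrib distrib_right)
  finally show ?thesis .
qed

lemma post_energy_mean_sum:
  assumes "a > 0" and "b > 0" and "M > 0"
  shows "post_energy_mean M a b v vs + post_energy_mean M b a vs v
         = (jbr M a v)\<^sup>2 + (jbr M b vs)\<^sup>2"
proof -
  let ?N = "norm (cmvel a b v vs)" and ?u = "norm (v - vs)"
  have "a * (b / (a + b))\<^sup>2 + b * (a / (a + b))\<^sup>2 = a * b * (a + b) / (a + b)\<^sup>2"
    by (simp add: power_divide add_divide_distrib power2_eq_square algebra_simps)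
  also have "\<dots> = a * b / (a + b)"
    using assms by (simp add: power2_eq_square)
  finally have weights: "a * (b / (a + b))\<^sup>2 + b * (a / (a + b))\<^sup>2 = a * b / (a + b)" .
  have "1 + a / M * (?N\<^sup>2 + (\<beta> * ?u)\<^sup>2) + (1 + b / M * (?N\<^sup>2 + (\<alpha> * ?u)\<^sup>2))
        = 2 + ((a + b) * ?N\<^sup>2 + (a * \<beta>\<^sup>2 + b * \<alpha>\<^sup>2) * ?u\<^sup>2) / M" for \<alpha> \<beta>
    using assms by (simp add: field_simps power_mult_distrib)
  from this[of "b / (a + b)" "a / (a + b)", unfolded weights]
  have "post_energy_mean M a b v vs + post_energy_mean M b a vs v
        = 2 + ((a + b) * ?N\<^sup>2 + a * b / (a + b) * ?u\<^sup>2) / M"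
    unfolding post_energy_mean_def cmvel_commute[of b a vs v] norm_minus_commute[of vs v]
    by (simp add: add.commute[of b a])
  also have "\<dots> = (jbr M a v)\<^sup>2 + (jbr M b vs)\<^sup>2"
    unfolding jbr_energy_cmvel[OF assms] by (simp add: add_divide_distrib distrib_right)
  finally show ?thesis .
qed

lemma post_energy_amplitude_eq_sqrt:
  assumes "a > 0" and "b > 0" and "M > 0"
  shows "2 * sqrt (a / (a + b) * (1 - a / (a + b))
                   * ((a + b) / M * (norm (cmvel a b v vs))\<^sup>2)
                   * (a * b / ((a + b) * M) * (norm (v - vs))\<^sup>2))
         = post_energy_amplitude M a b v vs"
proof -
  let ?c = "a * b * norm (v - vs) * norm (cmvel a b v vs) / (M * (a + b))"
  have ab: "a + b > 0" using assms by simp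
  then have "1 - a / (a + b) = b / (a + b)" by (simp add: field_simps)
  then have "a / (a + b) * (1 - a / (a + b)) * ((a + b) / M * (norm (cmvel a b v vs))\<^sup>2)
             * (a * b / ((a + b) * M) * (norm (v - vs))\<^sup>2) = ?c\<^sup>2" (is "?P = _")
    using ab assms by (simp add: power_mult_distrib power_divide) (simp add: field_simps power2_eq_square)
  moreover have "?c \<ge> 0" using assms by simp
  ultimately have "sqrt ?P = ?c" by (intro real_sqrt_unique) simp_all
  then show ?thesis unfolding post_energy_amplitude_def by simp
qed

lemma post_energy_amplitude_ex_split:
  assumes "a > 0" and "b > 0" and "M > 0"
    and E: "E = (jbr M a v)\<^sup>2 + (jbr M b vs)\<^sup>2"
  shows "\<exists>s \<in> {0..1}. 2 * sqrt (a / (a + b) * (1 - a / (a + b)) * (s * E - 1) * ((1 - s) * E - 1))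
                        = post_energy_amplitude M a b v vs"
proof -
  define X where "X = (a + b) / M * (norm (cmvel a b v vs))\<^sup>2"
  define Y where "Y = a * b / ((a + b) * M) * (norm (v - vs))\<^sup>2"
  have "X \<ge> 0" "Y \<ge> 0" using assms unfolding X_def Y_def by simp_all
  moreover have "E = 2 + X + Y"
    unfolding E X_def Y_def using jbr_energy_cmvel[OF assms(1-3)] .
  ultimately have "(1 + X) / E \<in> {0..1}" "(1 + X) / E * E - 1 = X" "(1 - (1 + X) / E) * E - 1 = Y"
    by (auto simp: field_simps)
  then show ?thesis
    using post_energy_amplitude_eq_sqrt[OF assms(1-3)] unfolding X_def Y_def by metis
qed

lemma post_energy_mean_add_amplitude_le:
  assumes "a > 0" and "b > 0" and "M > 0"
  shows "post_energy_mean M a b v vs + post_energy_amplitude M a b v vs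
         \<le> (jbr M a v)\<^sup>2 + (jbr M b vs)\<^sup>2"
proof -
  have "post_energy_amplitude M a b v vs \<le> post_energy_mean M b a vs v - 1"
    using post_energy_amplitude_le[of b M a vs v] assms
    by (simp add: post_energy_amplitude_commute[of M b a vs v])
  moreover have "post_energy_amplitude M a b v vs \<ge> 0"
    unfolding post_energy_amplitude_def using assms by simp
  ultimately show ?thesis using post_energy_mean_sum[OF assms, of v vs] by linarith
qed

theorem lemma4p1:
  fixes I :: nat and m :: "nat \<Rightarrow> real" and i j :: nat and v vs :: "real^3"
  assumes mpos: "\<And>l. l \<in> {1..I} \<Longrightarrow> m l > 0"
    and i: "i \<in> {1..I}" and j: "j \<in> {1..I}"
  shows "let M = total_mass I m;
             E = (jbr M (m i) v)\<^sup>2 + (jbr M (m j) vs)\<^sup>2;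
             r = m i / (m i + m j);
             Vh = unitv (cmvel (m i) (m j) v vs)
         in \<exists>p q s. s \<in> {0..1} \<and> p + q = E \<and>
              (let lam = 2 * sqrt (r * (1 - r) * (s * E - 1) * ((1 - s) * E - 1)) in
                 (\<forall>\<sigma> \<in> sphere (0::real^3) 1.
                    (jbr M (m i) (vpost (m i) (m j) v vs \<sigma>))\<^sup>2 = p + lam * (\<sigma> \<bullet> Vh) \<and>
                    (jbr M (m j) (vspost (m i) (m j) v vs \<sigma>))\<^sup>2 = q - lam * (\<sigma> \<bullet> Vh))
                 \<and> p + lam \<le> E \<and> q + lam \<le> E)"
proof -
  define M where "M = total_mass I m"
  define a where "a = m i"
  define b where "b = m j"
  have pos: "a > 0" "b > 0" "M > 0"
    using mpos i j total_mass_pos[OF mpos i] unfolding a_def b_def M_def by auto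
  obtain s where s: "s \<in> {0..1}"
    and lam: "2 * sqrt (a / (a + b) * (1 - a / (a + b))
                        * (s * ((jbr M a v)\<^sup>2 + (jbr M b vs)\<^sup>2) - 1)
                        * ((1 - s) * ((jbr M a v)\<^sup>2 + (jbr M b vs)\<^sup>2) - 1))
              = post_energy_amplitude M a b v vs"
    using post_energy_amplitude_ex_split[OF pos refl] by blast
  have bounds:
    "post_energy_mean M a b v vs + post_energy_amplitude M a b v vs \<le> (jbr M a v)\<^sup>2 + (jbr M b vs)\<^sup>2"
    "post_energy_mean M b a vs v + post_energy_amplitude M a b v vs \<le> (jbr M a v)\<^sup>2 + (jbr M b vs)\<^sup>2"
    using post_energy_mean_add_amplitude_le[OF pos] post_energy_mean_add_amplitude_le[of b a M vs v] pos
    by (simp_all add: post_energy_amplitude_commute[of M b a vs v] add.commute)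
  show ?thesis
    unfolding Let_def M_def[symmetric] a_def[symmetric] b_def[symmetric]
    apply (rule exI[of _ "post_energy_mean M a b v vs"], rule exI[of _ "post_energy_mean M b a vs v"],
        rule exI[of _ s])
    unfolding lam
    using s bounds post_energy_mean_sum[OF pos] pos by (simp add: jbr_vpost_sq jbr_vspost_sq)
qed

end
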